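(* Let $\Gamma_0$ be a connected $G$-graph (resp. a connected abelian $G$-graph), and let $\Gamma$ be a multigraph all of whose connected components are isomorphic to $\Gamma_0$. Then $\Gamma$ is a $G$-graph (resp. an abelian $G$-graph).
   Context: Work in ZFC (axiom of choice assumed). For a group $G$ and a multiset $S$ of elements of $G$, $\Phi(G,S)$ is the multigraph (parallel edges allowed) whose vertex set is the union over the members $s$ of $S$ (with multiplicity, a repeated element giving a separate copy of its cosets per occurrence) of $V_s=\{\langle s\rangle x: x\in G\}$ (right cosets), with, for $\langle s\rangle x\in V_s$, $\langle t\rangle y\in V_t$, $s,t$ distinct members of $S$, one edge labeled $g$ between them for each $g\in\langle s\rangle x\cap\langle t\rangle y$, and no other edges. A $G$-graph is a multigraph isomorphic (ignoring labels) to some $\Phi(G,S)$; an abelian $G$-graph is one isomorphic to some $\Phi(G,S)$ with $G$ abelian. *)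

theory Defs
  imports "HOL-Algebra.Algebra"
begin

text \<open>A multigraph: a vertex set, an edge set, and for each edge the set of its
  end vertices (one vertex for a loop, two otherwise).\<close>

record ('v, 'e) mgraph =
  mverts :: "'v set"
  marcs  :: "'e set"
  mends  :: "'e \<Rightarrow> 'v set"

definition multigraph :: "('v, 'e) mgraph \<Rightarrow> bool" where
  "multigraph \<Gamma> \<longleftrightarrow>
     (\<forall>e \<in> marcs \<Gamma>. mends \<Gamma> e \<subseteq> mverts \<Gamma> \<and> card (mends \<Gamma> e) \<in> {1, 2})"

definition mg_iso :: "('v, 'e) mgraph \<Rightarrow> ('w, 'f) mgraph \<Rightarrow> bool" where
  "mg_iso \<Gamma> \<Delta> \<longleftrightarrow>
     (\<exists>f h. bij_betw f (mverts \<Gamma>) (mverts \<Delta>) \<and> bij_betw h (marcs \<Gamma>) (marcs \<Delta>) \<and>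
            (\<forall>e \<in> marcs \<Gamma>. mends \<Delta> (h e) = f ` mends \<Gamma> e))"

definition mg_adj :: "('v, 'e) mgraph \<Rightarrow> ('v \<times> 'v) set" where
  "mg_adj \<Gamma> = {(u, v). \<exists>e \<in> marcs \<Gamma>. u \<in> mends \<Gamma> e \<and> v \<in> mends \<Gamma> e}"

definition mg_reachable :: "('v, 'e) mgraph \<Rightarrow> 'v \<Rightarrow> 'v \<Rightarrow> bool" where
  "mg_reachable \<Gamma> u v \<longleftrightarrow> u \<in> mverts \<Gamma> \<and> v \<in> mverts \<Gamma> \<and> (u, v) \<in> (mg_adj \<Gamma>)\<^sup>*"

definition mg_connected :: "('v, 'e) mgraph \<Rightarrow> bool" where
  "mg_connected \<Gamma> \<longleftrightarrow> mverts \<Gamma> \<noteq> {} \<and>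
     (\<forall>u \<in> mverts \<Gamma>. \<forall>v \<in> mverts \<Gamma>. mg_reachable \<Gamma> u v)"

definition mg_components :: "('v, 'e) mgraph \<Rightarrow> 'v set set" where
  "mg_components \<Gamma> = {{u. mg_reachable \<Gamma> v u} | v. v \<in> mverts \<Gamma>}"

definition mg_induced :: "('v, 'e) mgraph \<Rightarrow> 'v set \<Rightarrow> ('v, 'e) mgraph" where
  "mg_induced \<Gamma> C =
     \<lparr> mverts = C, marcs = {e \<in> marcs \<Gamma>. mends \<Gamma> e \<subseteq> C}, mends = mends \<Gamma> \<rparr>"

text \<open>The multiset S is given as an indexed family s : I \<rightarrow> carrier G (an element
  occurring several times in S corresponds to several indices).  Vertices are
  pairs (i, X) with X a right coset of the cyclic subgroup generated by s i;
  for distinct indices i, j and cosets X, Y there is one edge labelled g for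
  each g in X \<inter> Y, represented as the pair ({(i,X),(j,Y)}, g).\<close>

definition Phi :: "('a, 'b) monoid_scheme \<Rightarrow> 'i set \<Rightarrow> ('i \<Rightarrow> 'a)
                     \<Rightarrow> ('i \<times> 'a set, ('i \<times> 'a set) set \<times> 'a) mgraph" where
  "Phi G I s =
     \<lparr> mverts = {(k, A) | k A. k \<in> I \<and> A \<in> RCOSETS G (generate G {s k})},
       marcs = {({(k, A), (l, B)}, g) | k A l B g.
                  k \<in> I \<and> l \<in> I \<and> k \<noteq> l \<and>
                  A \<in> RCOSETS G (generate G {s k}) \<and>
                  B \<in> RCOSETS G (generate G {s l}) \<and> g \<in> A \<inter> B},
       mends = fst \<rparr>"

text \<open>G-graphs and abelian G-graphs.  Since HOL cannot quantify over types, the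
  type of group elements and the type of indices of the multiset S are
  explicit parameters.\<close>

definition G_graph :: "'g itself \<Rightarrow> 'i itself \<Rightarrow> ('v, 'e) mgraph \<Rightarrow> bool" where
  "G_graph _ _ \<Gamma> \<longleftrightarrow>
     (\<exists>(G :: 'g monoid) (I :: 'i set) s.
        group G \<and> s \<in> I \<rightarrow> carrier G \<and> mg_iso (Phi G I s) \<Gamma>)"

definition abelian_G_graph :: "'g itself \<Rightarrow> 'i itself \<Rightarrow> ('v, 'e) mgraph \<Rightarrow> bool" where
  "abelian_G_graph _ _ \<Gamma> \<longleftrightarrow>
     (\<exists>(G :: 'g monoid) (I :: 'i set) s.
        comm_group G \<and> s \<in> I \<rightarrow> carrier G \<and> mg_iso (Phi G I s) \<Gamma>)"

end

theory Submission
  imports Defs "HOL-Library.Disjoint_Sets"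
begin

text \<open>Let \<open>K\<close> be the set of components of \<open>\<Gamma>\<close>, so that \<open>\<Gamma>\<close> is the disjoint union of
  \<open>|K|\<close> copies of \<open>\<Gamma>\<^sub>0 \<cong> \<Phi>(G, S)\<close>. Pick an abelian group \<open>T\<close> of cardinality \<open>|K|\<close>
  (a cyclic group, or the free abelian group on \<open>K\<close>). The right cosets of \<open>\<langle>(s, 1)\<rangle>\<close> in
  \<open>G \<times> T\<close> are the sets \<open>A \<times> {t}\<close> with \<open>A\<close> a coset of \<open>\<langle>s\<rangle>\<close>, and two of them can only meet
  inside one layer \<open>G \<times> {t}\<close>; hence \<open>\<Phi>(G \<times> T, S \<times> {1})\<close> is the disjoint union of \<open>|T|\<close>
  copies of \<open>\<Phi>(G, S)\<close>, i.e. isomorphic to \<open>\<Gamma>\<close>. The group \<open>G \<times> T\<close> is abelian when \<open>G\<close> is.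
  If \<open>\<Gamma>\<close> is empty, take \<open>S\<close> empty instead.\<close>

lemma mg_iso_trans:
  assumes "mg_iso A B" and "mg_iso B C"
  shows "mg_iso A C"
proof -
  obtain f h where f: "bij_betw f (mverts A) (mverts B)" "bij_betw h (marcs A) (marcs B)"
    and ends_f: "\<forall>e \<in> marcs A. mends B (h e) = f ` mends A e"
    using assms(1) unfolding mg_iso_def by blast
  obtain f' h' where f': "bij_betw f' (mverts B) (mverts C)" "bij_betw h' (marcs B) (marcs C)"
    and ends_f': "\<forall>e \<in> marcs B. mends C (h' e) = f' ` mends B e"
    using assms(2) unfolding mg_iso_def by blast
  have "mends C ((h' \<circ> h) e) = (f' \<circ> f) ` mends A e" if "e \<in> marcs A" for e
    using that ends_f ends_f' bij_betwE[OF f(2)] by (simp add: image_comp)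
  with bij_betw_trans[OF f(1) f'(1)] bij_betw_trans[OF f(2) f'(2)] show ?thesis
    unfolding mg_iso_def by blast
qed

lemma mg_iso_sym:
  assumes ends: "\<forall>e \<in> marcs A. mends A e \<subseteq> mverts A" and "mg_iso A B"
  shows "mg_iso B A"
proof -
  obtain f h where f: "bij_betw f (mverts A) (mverts B)" and h: "bij_betw h (marcs A) (marcs B)"
    and ends_f: "\<forall>e \<in> marcs A. mends B (h e) = f ` mends A e"
    using assms(2) unfolding mg_iso_def by blast
  have "mends A (inv_into (marcs A) h e) = inv_into (mverts A) f ` mends B e" if "e \<in> marcs B" for e
  proof -
    let ?e = "inv_into (marcs A) h e"
    have "?e \<in> marcs A" and "h ?e = e"
      using h that by (auto simp: bij_betw_def intro: inv_into_into f_inv_into_f)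
    with ends_f ends f show ?thesis
      by (metis bij_betw_imp_inj_on inv_into_image_cancel)
  qed
  with bij_betw_inv_into[OF f] bij_betw_inv_into[OF h] show ?thesis
    unfolding mg_iso_def by blast
qed

lemma equiv_mg_reachable: "equiv (mverts \<Gamma>) {(u, v). mg_reachable \<Gamma> u v}"
proof -
  have "sym ((mg_adj \<Gamma>)\<^sup>*)"
    by (rule sym_rtrancl) (auto simp: sym_def mg_adj_def)
  then show ?thesis
    by (auto simp: equiv_def refl_on_def mg_reachable_def intro!: symI transI dest: symD)
qed

lemma mg_components_eq_quotient:
  "mg_components \<Gamma> = mverts \<Gamma> // {(u, v). mg_reachable \<Gamma> u v}"
  by (auto simp: mg_components_def quotient_def)

lemma Union_mg_components: "\<Union>(mg_components \<Gamma>) = mverts \<Gamma>"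
  by (simp add: mg_components_eq_quotient Union_quotient[OF equiv_mg_reachable])

lemma disjoint_mg_components: "disjoint (mg_components \<Gamma>)"
  unfolding mg_components_eq_quotient
  by (auto simp: disjoint_def dest: quotient_disj[OF equiv_mg_reachable])

lemma mends_nonempty: "multigraph \<Gamma> \<Longrightarrow> e \<in> marcs \<Gamma> \<Longrightarrow> mends \<Gamma> e \<noteq> {}"
  by (fastforce simp: multigraph_def)

lemma mends_subset_mg_component:
  assumes "multigraph \<Gamma>" and "e \<in> marcs \<Gamma>"
  obtains C where "C \<in> mg_components \<Gamma>" and "mends \<Gamma> e \<subseteq> C"
proof -
  obtain u where u: "u \<in> mends \<Gamma> e" using mends_nonempty[OF assms] by blast
  have ends: "mends \<Gamma> e \<subseteq> mverts \<Gamma>" using assms unfolding multigraph_def by blast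
  have "(u, w) \<in> mg_adj \<Gamma>" if "w \<in> mends \<Gamma> e" for w
    using u that assms(2) unfolding mg_adj_def by blast
  then have "mends \<Gamma> e \<subseteq> {w. mg_reachable \<Gamma> u w}"
    using u ends unfolding mg_reachable_def by blast
  moreover have "{w. mg_reachable \<Gamma> u w} \<in> mg_components \<Gamma>"
    using u ends unfolding mg_components_def by blast
  ultimately show ?thesis using that by blast
qed

definition mg_copies :: "('v, 'e) mgraph \<Rightarrow> 'x set \<Rightarrow> ('v \<times> 'x, 'e \<times> 'x) mgraph" where
  "mg_copies Q Y = \<lparr> mverts = mverts Q \<times> Y, marcs = marcs Q \<times> Y,
                    mends = (\<lambda>(e, x). (\<lambda>v. (v, x)) ` mends Q e) \<rparr>"

lemma bij_betw_disjoint_copies: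
  assumes "disjoint_family_on B Y" and "\<And>x. x \<in> Y \<Longrightarrow> bij_betw (\<phi> x) A (B x)"
  shows "bij_betw (\<lambda>(a, x). \<phi> x a) (A \<times> Y) (\<Union>x\<in>Y. B x)"
proof -
  have "bij_betw (\<lambda>(a, x). \<phi> x a) (A \<times> {x}) (B x)" if "x \<in> Y" for x
    using assms(2)[OF that] by (force simp: bij_betw_def inj_on_def)
  then have "bij_betw (\<lambda>(a, x). \<phi> x a) (\<Union>x\<in>Y. A \<times> {x}) (\<Union>x\<in>Y. B x)"
    by (rule bij_betw_UNION_disjoint[OF assms(1)])
  moreover have "(\<Union>x\<in>Y. A \<times> {x}) = A \<times> Y" by blast
  ultimately show ?thesis by simp
qed

lemma Union_mg_component_arcs:
  assumes "multigraph \<Gamma>"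
  shows "(\<Union>C\<in>mg_components \<Gamma>. {e \<in> marcs \<Gamma>. mends \<Gamma> e \<subseteq> C}) = marcs \<Gamma>"
proof (intro equalityI subsetI)
  fix e assume e: "e \<in> marcs \<Gamma>"
  then obtain C where "C \<in> mg_components \<Gamma>" and "mends \<Gamma> e \<subseteq> C"
    by (rule mends_subset_mg_component[OF assms])
  with e show "e \<in> (\<Union>C\<in>mg_components \<Gamma>. {e \<in> marcs \<Gamma>. mends \<Gamma> e \<subseteq> C})" by blast
qed blast

lemma disjoint_family_on_mg_component_arcs:
  assumes "multigraph \<Gamma>"
  shows "disjoint_family_on (\<lambda>C. {e \<in> marcs \<Gamma>. mends \<Gamma> e \<subseteq> C}) (mg_components \<Gamma>)"
  using disjoint_mg_components mends_nonempty[OF assms]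
  by (fastforce simp: disjoint_family_on_def disjoint_def)

lemma mg_iso_copies_components:
  assumes "multigraph \<Gamma>" and "\<forall>C \<in> mg_components \<Gamma>. mg_iso Q (mg_induced \<Gamma> C)"
  shows "mg_iso (mg_copies Q (mg_components \<Gamma>)) \<Gamma>"
proof -
  let ?K = "mg_components \<Gamma>"
  let ?arcs = "\<lambda>C. {e \<in> marcs \<Gamma>. mends \<Gamma> e \<subseteq> C}"
  from assms(2) have "\<forall>C\<in>?K. \<exists>f h. bij_betw f (mverts Q) C \<and> bij_betw h (marcs Q) (?arcs C) \<and>
      (\<forall>e \<in> marcs Q. mends \<Gamma> (h e) = f ` mends Q e)"
    by (simp add: mg_iso_def mg_induced_def)
  from bchoice[OF this] obtain f where "\<forall>C\<in>?K. \<exists>h. bij_betw (f C) (mverts Q) C \<and>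
      bij_betw h (marcs Q) (?arcs C) \<and> (\<forall>e \<in> marcs Q. mends \<Gamma> (h e) = f C ` mends Q e)" ..
  from bchoice[OF this] obtain h where iso_C: "\<forall>C\<in>?K. bij_betw (f C) (mverts Q) C \<and>
      bij_betw (h C) (marcs Q) (?arcs C) \<and> (\<forall>e \<in> marcs Q. mends \<Gamma> (h C e) = f C ` mends Q e)" ..
  have "disjoint_family_on (\<lambda>C. C) ?K"
    by (rule disjoint_image_disjoint_family_on) (simp_all add: disjoint_mg_components)
  then have "bij_betw (\<lambda>(v, C). f C v) (mverts Q \<times> ?K) (\<Union>C\<in>?K. C)"
    by (rule bij_betw_disjoint_copies) (use iso_C in blast)
  then have "bij_betw (\<lambda>(v, C). f C v) (mverts Q \<times> ?K) (mverts \<Gamma>)"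
    by (simp add: Union_mg_components)
  moreover have "bij_betw (\<lambda>(e, C). h C e) (marcs Q \<times> ?K) (\<Union>C\<in>?K. ?arcs C)"
    by (rule bij_betw_disjoint_copies[OF disjoint_family_on_mg_component_arcs[OF assms(1)]])
      (use iso_C in blast)
  moreover have "mends \<Gamma> (h C e) = (\<lambda>(v, C). f C v) ` mends (mg_copies Q ?K) (e, C)"
    if "e \<in> marcs Q" and "C \<in> ?K" for e C
    using iso_C that by (auto simp: mg_copies_def image_image)
  ultimately show ?thesis
    unfolding mg_iso_def Union_mg_component_arcs[OF assms(1)]
    by (intro exI[of _ "\<lambda>(v, C). f C v"] exI[of _ "\<lambda>(e, C). h C e"]) (auto simp: mg_copies_def)
qed

lemma mg_iso_copies_reindex:
  assumes "bij_betw \<beta> Y Z"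
  shows "mg_iso (mg_copies Q Y) (mg_copies Q Z)"
proof -
  have "bij_betw (map_prod id \<beta>) (mverts Q \<times> Y) (mverts Q \<times> Z)"
    and "bij_betw (map_prod id \<beta>) (marcs Q \<times> Y) (marcs Q \<times> Z)"
    by (intro bij_betw_map_prod bij_betw_id assms)+
  then show ?thesis
    unfolding mg_iso_def mg_copies_def
    by (intro exI[of _ "map_prod id \<beta>"]) (auto simp: image_image)
qed

lemma generate_DirProd_one:
  assumes G: "group G" and T: "group T" and a: "a \<in> carrier G"
  shows "generate (G \<times>\<times> T) {(a, \<one>\<^bsub>T\<^esub>)} = generate G {a} \<times> {\<one>\<^bsub>T\<^esub>}"
proof -
  interpret T: group T by (rule T)
  interpret embed: group_hom G "G \<times>\<times> T" "\<lambda>x. (x, \<one>\<^bsub>T\<^esub>)"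
    using G T by (auto simp: group_hom_def group_hom_axioms_def hom_def DirProd_group)
  show ?thesis
    using embed.generate_img[of "{a}"] a by auto
qed

lemma RCOSETS_DirProd_one:
  assumes "group T"
  shows "RCOSETS (G \<times>\<times> T) (L \<times> {\<one>\<^bsub>T\<^esub>}) = (\<lambda>(A, h). A \<times> {h}) ` (RCOSETS G L \<times> carrier T)"
proof -
  interpret T: group T by (rule assms)
  have "(L \<times> {\<one>\<^bsub>T\<^esub>}) #>\<^bsub>G \<times>\<times> T\<^esub> (g, h) = (L #>\<^bsub>G\<^esub> g) \<times> {h}" if "h \<in> carrier T" for g h
    using that unfolding r_coset_def by auto
  then show ?thesis
    unfolding RCOSETS_def by (auto simp: image_iff) blast
qed

lemma RCOSETS_generate_nonempty:
  assumes "A \<in> RCOSETS G (generate G Z)" shows "A \<noteq> {}"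
  using assms generate.one unfolding RCOSETS_def r_coset_def by blast

lemma RCOSETS_generate_DirProd_one:
  assumes "group G" and "group T" and "a \<in> carrier G"
  shows "RCOSETS (G \<times>\<times> T) (generate (G \<times>\<times> T) {(a, \<one>\<^bsub>T\<^esub>)})
           = (\<lambda>(A, h). A \<times> {h}) ` (RCOSETS G (generate G {a}) \<times> carrier T)"
  using generate_DirProd_one[OF assms] RCOSETS_DirProd_one[OF assms(2)] by simp

definition Phi_layer :: "'c \<Rightarrow> 'i \<times> 'a set \<Rightarrow> 'i \<times> ('a \<times> 'c) set" where
  "Phi_layer h = (\<lambda>(k, A). (k, A \<times> {h}))"

lemma inj_Phi_layer: "inj (Phi_layer h)"
  by (auto simp: inj_def Phi_layer_def times_eq_iff)

lemma mverts_Phi_DirProd: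
  assumes G: "group G" and T: "group T" and s: "s \<in> I \<rightarrow> carrier G"
  shows "mverts (Phi (G \<times>\<times> T) I (\<lambda>k. (s k, \<one>\<^bsub>T\<^esub>)))
           = (\<lambda>(v, h). Phi_layer h v) ` (mverts (Phi G I s) \<times> carrier T)"
    (is "?V = _")
proof -
  note RC = RCOSETS_generate_DirProd_one[OF G T funcset_mem[OF s]]
  show ?thesis
  proof (intro equalityI subsetI)
    fix y assume "y \<in> ?V"
    then obtain k A h where "k \<in> I" "A \<in> RCOSETS G (generate G {s k})" "h \<in> carrier T"
      "y = (k, A \<times> {h})"
      using RC by (auto simp: Phi_def)
    then show "y \<in> (\<lambda>(v, h). Phi_layer h v) ` (mverts (Phi G I s) \<times> carrier T)"
      by (auto simp: Phi_def Phi_layer_def intro!: rev_image_eqI[of "((k, A), h)"])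
  qed (auto simp: Phi_def Phi_layer_def RC)
qed

lemma marcs_Phi_DirProd:
  assumes G: "group G" and T: "group T" and s: "s \<in> I \<rightarrow> carrier G"
  shows "marcs (Phi (G \<times>\<times> T) I (\<lambda>k. (s k, \<one>\<^bsub>T\<^esub>)))
           = (\<lambda>((V, g), h). (Phi_layer h ` V, (g, h))) ` (marcs (Phi G I s) \<times> carrier T)"
    (is "?E = ?M ` _")
proof -
  note RC = RCOSETS_generate_DirProd_one[OF G T funcset_mem[OF s]]
  show ?thesis
  proof (intro equalityI subsetI)
    fix y assume "y \<in> ?E"
    then obtain k l A B g h where "k \<in> I" "l \<in> I" "k \<noteq> l" "A \<in> RCOSETS G (generate G {s k})"
      "B \<in> RCOSETS G (generate G {s l})" "g \<in> A \<inter> B" "h \<in> carrier T"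
      "y = ({(k, A \<times> {h}), (l, B \<times> {h})}, (g, h))"
      using RC by (auto simp: Phi_def)
    then show "y \<in> ?M ` (marcs (Phi G I s) \<times> carrier T)"
      by (auto simp: Phi_def Phi_layer_def intro!: rev_image_eqI[of "(({(k, A), (l, B)}, g), h)"])
        blast
  next
    fix y assume "y \<in> ?M ` (marcs (Phi G I s) \<times> carrier T)"
    then obtain k l A B g h where "k \<in> I" "l \<in> I" "k \<noteq> l" and "A \<in> RCOSETS G (generate G {s k})"
      "B \<in> RCOSETS G (generate G {s l})" and "g \<in> A \<inter> B" "h \<in> carrier T"
      "y = ({(k, A \<times> {h}), (l, B \<times> {h})}, (g, h))"
      by (auto simp: Phi_def Phi_layer_def)
    moreover from this
    have "A \<times> {h} \<in> RCOSETS (G \<times>\<times> T) (generate (G \<times>\<times> T) {(s k, \<one>\<^bsub>T\<^esub>)})"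
      and "B \<times> {h} \<in> RCOSETS (G \<times>\<times> T) (generate (G \<times>\<times> T) {(s l, \<one>\<^bsub>T\<^esub>)})"
      using RC by auto
    ultimately show "y \<in> ?E"
      unfolding Phi_def by auto
  qed
qed

lemma mg_iso_copies_Phi_DirProd:
  assumes G: "group G" and T: "group T" and s: "s \<in> I \<rightarrow> carrier G"
  shows "mg_iso (mg_copies (Phi G I s) (carrier T)) (Phi (G \<times>\<times> T) I (\<lambda>k. (s k, \<one>\<^bsub>T\<^esub>)))"
proof -
  let ?\<Phi> = "Phi (G \<times>\<times> T) I (\<lambda>k. (s k, \<one>\<^bsub>T\<^esub>))"
  let ?m = "\<lambda>(v, h). Phi_layer h v"
  let ?M = "\<lambda>((V, g), h). (Phi_layer h ` V, (g, h))"
  have "inj_on ?m (mverts (Phi G I s) \<times> carrier T)"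
    using RCOSETS_generate_nonempty
    by (fastforce simp: inj_on_def Phi_def Phi_layer_def times_eq_iff)
  then have "bij_betw ?m (mverts (mg_copies (Phi G I s) (carrier T))) (mverts ?\<Phi>)"
    by (simp add: bij_betw_def mg_copies_def mverts_Phi_DirProd[OF assms])
  moreover have "inj_on ?M (marcs (Phi G I s) \<times> carrier T)"
    by (auto simp: inj_on_def inj_image_eq_iff[OF inj_Phi_layer])
  then have "bij_betw ?M (marcs (mg_copies (Phi G I s) (carrier T))) (marcs ?\<Phi>)"
    by (simp add: bij_betw_def mg_copies_def marcs_Phi_DirProd[OF assms])
  moreover have "mends ?\<Phi> (?M e) = ?m ` mends (mg_copies (Phi G I s) (carrier T)) e" for e
    by (auto simp: Phi_def mg_copies_def image_image split: prod.splits)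
  ultimately show ?thesis
    unfolding mg_iso_def by blast
qed

lemma comm_group_DirProd:
  assumes "comm_group G" and "comm_group H"
  shows "comm_group (G \<times>\<times> H)"
proof -
  interpret G: comm_group G by (rule assms(1))
  interpret H: comm_group H by (rule assms(2))
  show ?thesis
    by (rule group.group_comm_groupI[OF DirProd_group[OF G.is_group H.is_group]])
      (auto simp: G.m_comm H.m_comm)
qed

lemma comm_group_image_group:
  assumes "comm_group G" and "inj_on f (carrier G)"
  shows "comm_group (image_group f G)"
  using comm_group.iso_imp_img_comm_group[OF assms(1) inj_imp_image_group_iso[OF assms(2)]]
  by (simp add: image_group_def)

lemma comm_group_transfer_eqpoll:
  fixes A :: "'a set" and H :: "('b, 'c) monoid_scheme"
  assumes "comm_group H" and "carrier H \<approx> A"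
  shows "\<exists>T :: ('a \<Rightarrow> int) monoid. comm_group T \<and> carrier T \<approx> A"
proof -
  obtain \<gamma> where \<gamma>: "bij_betw \<gamma> (carrier H) A"
    using assms(2) unfolding eqpoll_def by blast
  define f where "f x = (\<lambda>a. of_bool (a = \<gamma> x) :: int)" for x
  have "inj_on f (carrier H)"
    using bij_betw_imp_inj_on[OF \<gamma>] by (auto simp: inj_on_def f_def fun_eq_iff)
  then have "comm_group (image_group f H)" and "carrier (image_group f H) \<approx> A"
    using comm_group_image_group[OF assms(1)] inj_on_image_eqpoll_self eqpoll_trans assms(2)
    by (auto simp: image_group_carrier)
  then show ?thesis by blast
qed

lemma ex_comm_group_eqpoll:
  fixes A :: "'a set"
  assumes "A \<noteq> {}"
  shows "\<exists>T :: ('a \<Rightarrow> int) monoid. comm_group T \<and> carrier T \<approx> A"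
proof (cases "finite A")
  case True
  with assms have "carrier (integer_mod_group (card A)) \<approx> A"
    by (simp add: carrier_integer_mod_group eqpoll_iff_card)
  then show ?thesis
    by (rule comm_group_transfer_eqpoll[OF abelian_integer_mod_group])
next
  case False
  then show ?thesis
    by (rule comm_group_transfer_eqpoll[OF abelian_free_Abelian_group eqpoll_free_Abelian_group_infinite])
qed

lemma ex_Phi_DirProd_iso_components:
  fixes G :: "('a, 'b) monoid_scheme" and \<Gamma> :: "('v, 'e) mgraph" and I :: "'i set"
  assumes \<Gamma>: "multigraph \<Gamma>" and G: "group G" and s: "s \<in> I \<rightarrow> carrier G"
    and "mg_iso (Phi G I s) \<Gamma>0"
    and "\<forall>C \<in> mg_components \<Gamma>. mg_iso (mg_induced \<Gamma> C) \<Gamma>0"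
  obtains T :: "('v set \<Rightarrow> int) monoid" and I' :: "'i set" and s'
  where "comm_group T" and "s' \<in> I' \<rightarrow> carrier (G \<times>\<times> T)" and "mg_iso (Phi (G \<times>\<times> T) I' s') \<Gamma>"
proof (cases "mg_components \<Gamma> = {}")
  case True
  then have "mverts \<Gamma> = {}" and "marcs \<Gamma> = {}"
    using Union_mg_components[of \<Gamma>] Union_mg_component_arcs[OF \<Gamma>] by auto
  then have "mg_iso (Phi (G \<times>\<times> singleton_group (\<lambda>_. 0)) {} (\<lambda>_. undefined)) \<Gamma>"
    by (simp add: mg_iso_def Phi_def bij_betw_def)
  then show ?thesis
    by (rule that[rotated 2]) auto
next
  case False
  then obtain T :: "('v set \<Rightarrow> int) monoid" where T: "comm_group T"
    and "carrier T \<approx> mg_components \<Gamma>"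
    using ex_comm_group_eqpoll by blast
  then obtain \<beta> where \<beta>: "bij_betw \<beta> (carrier T) (mg_components \<Gamma>)"
    unfolding eqpoll_def by blast
  interpret T: comm_group T by (rule T)
  have "mg_iso (Phi G I s) (mg_induced \<Gamma> C)" if "C \<in> mg_components \<Gamma>" for C
  proof -
    from that assms(5) have "mg_iso (mg_induced \<Gamma> C) \<Gamma>0" by blast
    then have "mg_iso \<Gamma>0 (mg_induced \<Gamma> C)"
      by (rule mg_iso_sym[rotated]) (simp add: mg_induced_def)
    with assms(4) show ?thesis by (rule mg_iso_trans)
  qed
  then have "mg_iso (mg_copies (Phi G I s) (mg_components \<Gamma>)) \<Gamma>"
    using \<Gamma> by (intro mg_iso_copies_components) auto
  moreover have "mg_iso (Phi (G \<times>\<times> T) I (\<lambda>k. (s k, \<one>\<^bsub>T\<^esub>))) (mg_copies (Phi G I s) (carrier T))"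
    using mg_iso_copies_Phi_DirProd[OF G T.is_group s]
    by (rule mg_iso_sym[rotated]) (auto simp: mg_copies_def Phi_def)
  moreover have "(\<lambda>k. (s k, \<one>\<^bsub>T\<^esub>)) \<in> I \<rightarrow> carrier (G \<times>\<times> T)"
    using s by auto
  ultimately show ?thesis
    using that[OF T] mg_iso_trans[OF _ mg_iso_trans[OF mg_iso_copies_reindex[OF \<beta>]]] by blast
qed

theorem proposition3:
  fixes \<Gamma>0 :: "('v0, 'e0) mgraph" and \<Gamma> :: "('v, 'e) mgraph"
  assumes "multigraph \<Gamma>"
    and "mg_connected \<Gamma>0"
    and "\<forall>C \<in> mg_components \<Gamma>. mg_iso (mg_induced \<Gamma> C) \<Gamma>0"
  shows "(G_graph TYPE('g) TYPE('i) \<Gamma>0 \<longrightarrow>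
            G_graph TYPE('g \<times> ('v set \<Rightarrow> int)) TYPE('i) \<Gamma>) \<and>
         (abelian_G_graph TYPE('g) TYPE('i) \<Gamma>0 \<longrightarrow>
            abelian_G_graph TYPE('g \<times> ('v set \<Rightarrow> int)) TYPE('i) \<Gamma>)"
proof -
  have "\<exists>(G' :: ('g \<times> ('v set \<Rightarrow> int)) monoid) (I' :: 'i set) s'.
          group G' \<and> (comm_group G \<longrightarrow> comm_group G') \<and> s' \<in> I' \<rightarrow> carrier G' \<and>
          mg_iso (Phi G' I' s') \<Gamma>"
    if G: "group G" and s: "s \<in> I \<rightarrow> carrier G" and iso: "mg_iso (Phi G I s) \<Gamma>0"
    for G :: "'g monoid" and I :: "'i set" and s
  proof -
    obtain T :: "('v set \<Rightarrow> int) monoid" and I' :: "'i set" and s'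
      where T: "comm_group T" and "s' \<in> I' \<rightarrow> carrier (G \<times>\<times> T)" "mg_iso (Phi (G \<times>\<times> T) I' s') \<Gamma>"
      using ex_Phi_DirProd_iso_components[OF assms(1) G s iso assms(3)] .
    moreover have "group (G \<times>\<times> T)"
      by (rule DirProd_group[OF G comm_group.axioms(2)[OF T]])
    moreover have "comm_group G \<Longrightarrow> comm_group (G \<times>\<times> T)"
      using comm_group_DirProd T by blast
    ultimately show ?thesis by blast
  qed
  then show ?thesis
    unfolding G_graph_def abelian_G_graph_def by (meson comm_group.axioms(2))
qed

end
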